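(* Let $S$ be an intra-regular $\Gamma$-AG$^{**}$-groupoid and let $B$ be a $\Gamma$-interior ideal of $S$. Then $(S\Gamma B)\Gamma S=S\cap B=B$.
   Context: Let $S$ and $\Gamma$ be nonempty sets with a map $S\times\Gamma\times S\to S$, $(x,\gamma,y)\mapsto x\gamma y$. $S$ is a $\Gamma$-AG-groupoid if $(x\gamma y)\delta z=(z\gamma y)\delta x$ for all $x,y,z\in S$, $\gamma,\delta\in\Gamma$; it is a $\Gamma$-AG$^{**}$-groupoid if moreover $a\alpha(b\beta c)=b\alpha(a\beta c)$ for all $a,b,c\in S$, $\alpha,\beta\in\Gamma$. For subsets $A,B\subseteq S$, $A\Gamma B=\{a\gamma b: a\in A,\gamma\in\Gamma,b\in B\}$. $S$ is intra-regular if for every $a\in S$ there exist $x,y\in S$ and $\beta,\gamma,\delta\in\Gamma$ with $a=(x\beta(a\delta a))\gamma y$. A nonempty subset $B\subseteq S$ with $B\Gamma B\subseteq B$ is a $\Gamma$-interior ideal if $(S\Gamma B)\Gamma S\subseteq B$. *)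

theory Defs
  imports Main
begin

definition gamma_groupoid :: "'a set \<Rightarrow> 'g set \<Rightarrow> ('a \<Rightarrow> 'g \<Rightarrow> 'a \<Rightarrow> 'a) \<Rightarrow> bool" where
  "gamma_groupoid S G op \<longleftrightarrow> S \<noteq> {} \<and> G \<noteq> {} \<and>
     (\<forall>x\<in>S. \<forall>g\<in>G. \<forall>y\<in>S. op x g y \<in> S)"

definition gamma_AG_groupoid :: "'a set \<Rightarrow> 'g set \<Rightarrow> ('a \<Rightarrow> 'g \<Rightarrow> 'a \<Rightarrow> 'a) \<Rightarrow> bool" where
  "gamma_AG_groupoid S G op \<longleftrightarrow> gamma_groupoid S G op \<and>
     (\<forall>x\<in>S. \<forall>y\<in>S. \<forall>z\<in>S. \<forall>g\<in>G. \<forall>d\<in>G.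
        op (op x g y) d z = op (op z g y) d x)"

definition gamma_AG2_groupoid :: "'a set \<Rightarrow> 'g set \<Rightarrow> ('a \<Rightarrow> 'g \<Rightarrow> 'a \<Rightarrow> 'a) \<Rightarrow> bool" where
  "gamma_AG2_groupoid S G op \<longleftrightarrow> gamma_AG_groupoid S G op \<and>
     (\<forall>a\<in>S. \<forall>b\<in>S. \<forall>c\<in>S. \<forall>al\<in>G. \<forall>be\<in>G.
        op a al (op b be c) = op b al (op a be c))"

definition gset_prod :: "('a \<Rightarrow> 'g \<Rightarrow> 'a \<Rightarrow> 'a) \<Rightarrow> 'a set \<Rightarrow> 'g set \<Rightarrow> 'a set \<Rightarrow> 'a set" where
  "gset_prod op A G B = {op a g b | a g b. a \<in> A \<and> g \<in> G \<and> b \<in> B}"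

definition intra_regular :: "'a set \<Rightarrow> 'g set \<Rightarrow> ('a \<Rightarrow> 'g \<Rightarrow> 'a \<Rightarrow> 'a) \<Rightarrow> bool" where
  "intra_regular S G op \<longleftrightarrow> (\<forall>a\<in>S. \<exists>x\<in>S. \<exists>y\<in>S. \<exists>be\<in>G. \<exists>ga\<in>G. \<exists>de\<in>G.
      a = op (op x be (op a de a)) ga y)"

definition gamma_interior_ideal :: "'a set \<Rightarrow> 'g set \<Rightarrow> ('a \<Rightarrow> 'g \<Rightarrow> 'a \<Rightarrow> 'a) \<Rightarrow> 'a set \<Rightarrow> bool" where
  "gamma_interior_ideal S G op B \<longleftrightarrow> B \<noteq> {} \<and> B \<subseteq> S \<and>
     gset_prod op B G B \<subseteq> B \<and>
     gset_prod op (gset_prod op S G B) G S \<subseteq> B"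

end

theory Submission
  imports Defs
begin

(* An interior ideal B satisfies (S G B) G S \<subseteq> B by definition, and
   B \<subseteq> S.  For the reverse inclusion we use intra-regularity: each b \<in> B can be
   written b = (x be (b de b)) ga y with x, y \<in> S.  Since B is closed under the
   ternary product, b de b \<in> B, so x be (b de b) \<in> S G B and therefore
   b \<in> (S G B) G S. *)

lemma gset_prod_memI:
  assumes "a \<in> A" "g \<in> G" "b \<in> B"
  shows "op a g b \<in> gset_prod op A G B"
  using assms unfolding gset_prod_def by blast

lemma intra_regular_subset_interior_product:
  assumes reg: "intra_regular S G op"
    and BS: "B \<subseteq> S"
    and closed: "gset_prod op B G B \<subseteq> B"
  shows "B \<subseteq> gset_prod op (gset_prod op S G B) G S"
proof
  fix b assume b: "b \<in> B"
  then obtain x y be ga de where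
    xy: "x \<in> S" "y \<in> S" and params: "be \<in> G" "ga \<in> G" "de \<in> G"
    and decomp: "b = op (op x be (op b de b)) ga y"
    using reg BS unfolding intra_regular_def by blast
  have "op b de b \<in> B"
    using closed gset_prod_memI[OF b \<open>de \<in> G\<close> b] by blast
  then have "op x be (op b de b) \<in> gset_prod op S G B"
    using gset_prod_memI xy params by metis
  then show "b \<in> gset_prod op (gset_prod op S G B) G S"
    using decomp gset_prod_memI xy params by metis
qed

theorem mainTheorem3:
  fixes S :: "'a set" and G :: "'g set" and op :: "'a \<Rightarrow> 'g \<Rightarrow> 'a \<Rightarrow> 'a" and B :: "'a set"
  assumes "gamma_AG2_groupoid S G op"
    and "intra_regular S G op"
    and "gamma_interior_ideal S G op B"
  shows "gset_prod op (gset_prod op S G B) G S = S \<inter> B \<and> S \<inter> B = B"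
proof -
  have BS: "B \<subseteq> S" and closed: "gset_prod op B G B \<subseteq> B"
    and interior: "gset_prod op (gset_prod op S G B) G S \<subseteq> B"
    using assms(3) unfolding gamma_interior_ideal_def by auto
  have "B \<subseteq> gset_prod op (gset_prod op S G B) G S"
    using intra_regular_subset_interior_product[OF assms(2) BS closed] .
  with interior BS show ?thesis by blast
qed

end
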